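(* Let $\lambda:\mathbb R_+\to\mathbb R_+$ satisfy (A1), and suppose $\lambda(u)\le ku$ for all $u\ge0$ for some $k>0$ with $kh<\alpha$. Then $\delta_0$ is the only invariant probability measure of (NL), and it is globally attractive: if $\eta_t$ denotes the law at time $t$ of a solution of (NL) with initial law $\eta_0$ (with finite first moment), then for all $t\ge0$ $$W_1(\eta_t,\delta_0)\le e^{-(\alpha-kh)t}W_1(\eta_0,\delta_0).$$
   Context: Assumption (A1): $\lambda$ is bounded, increasing, Lipschitz, and $\lambda(0)=0$. Let $h,\alpha>0$ and let $\pi$ be a Poisson random measure on $\mathbb R_+\times\mathbb R_+$ with intensity $ds\,dz$. The nonlinear limit equation (NL) is $\bar U(t)=\bar U(0)-\alpha\int_0^t\bar U(s)ds+h\int_0^t\mathbb E[\lambda(\bar U(s))]ds-\int_{[0,t]\times\mathbb R_+}\bar U(s-)\mathbf 1_{\{z\le\lambda(\bar U(s-))\}}\pi(ds,dz)$, with $\bar U(0)\ge0$ independent of $\pi$. $W_1$ is the order-1 Wasserstein distance on probability measures on $\mathbb R_+$. *)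

theory Defs
  imports "HOL-Probability.Probability"
begin

definition poisson_law :: "real \<Rightarrow> nat measure" where
  "poisson_law m = measure_pmf (if m = 0 then return_pmf 0 else poisson_pmf m)"

definition quadrant :: "(real \<times> real) set" where
  "quadrant = {0..} \<times> {0..}"

definition test_set :: "(real \<times> real) set \<Rightarrow> bool" where
  "test_set A \<longleftrightarrow> A \<in> sets (lborel :: (real \<times> real) measure) \<and> A \<subseteq> quadrant
     \<and> emeasure (lborel :: (real \<times> real) measure) A < \<infinity>"

text \<open>A Poisson random measure on R+ x R+ with intensity ds dz, given by its
  (random) set of atoms.\<close>
definition poisson_random_measure :: "'a measure \<Rightarrow> ('a \<Rightarrow> (real \<times> real) set) \<Rightarrow> bool" where
  "poisson_random_measure M Npts \<longleftrightarrow>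
     (\<forall>\<omega>\<in>space M. Npts \<omega> \<subseteq> quadrant) \<and>
     (\<forall>A. test_set A \<longrightarrow> (AE \<omega> in M. finite (Npts \<omega> \<inter> A))) \<and>
     (\<forall>(F :: nat \<Rightarrow> (real \<times> real) set) n.
        (\<forall>i<n. test_set (F i)) \<and> disjoint_family_on F {..<n} \<longrightarrow>
          prob_space.indep_vars M (\<lambda>_. count_space UNIV) (\<lambda>i \<omega>. card (Npts \<omega> \<inter> F i)) {..<n} \<and>
          (\<forall>i<n. distr M (count_space UNIV) (\<lambda>\<omega>. card (Npts \<omega> \<inter> F i))
                    = poisson_law (measure lborel (F i))))"

definition left_lim :: "(real \<Rightarrow> 'a \<Rightarrow> real) \<Rightarrow> real \<Rightarrow> 'a \<Rightarrow> real" where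
  "left_lim U s \<omega> = (if s \<le> 0 then U 0 \<omega> else Lim (at_left s) (\<lambda>r. U r \<omega>))"

definition NL_solution ::
  "'a measure \<Rightarrow> ('a \<Rightarrow> (real \<times> real) set) \<Rightarrow> real \<Rightarrow> real \<Rightarrow> (real \<Rightarrow> real)
     \<Rightarrow> (real \<Rightarrow> 'a \<Rightarrow> real) \<Rightarrow> bool" where
  "NL_solution M Npts alpha h lam U \<longleftrightarrow>
     (\<forall>t\<ge>0. U t \<in> borel_measurable M) \<and>
     (\<forall>\<omega>\<in>space M. \<forall>t\<ge>0. 0 \<le> U t \<omega>) \<and>
     (\<forall>\<omega>\<in>space M. \<forall>t\<ge>0. continuous (at_right t) (\<lambda>s. U s \<omega>)) \<and>
     (\<forall>\<omega>\<in>space M. \<forall>t>0. \<exists>l. ((\<lambda>s. U s \<omega>) \<longlongrightarrow> l) (at_left t)) \<and>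
     (\<forall>(F :: nat \<Rightarrow> (real \<times> real) set) n.
        (\<forall>i<n. test_set (F i)) \<and> disjoint_family_on F {..<n} \<longrightarrow>
        prob_space.indep_vars M (\<lambda>_. borel)
          (\<lambda>j \<omega>. case j of None \<Rightarrow> U 0 \<omega> | Some i \<Rightarrow> real (card (Npts \<omega> \<inter> F i)))
          (insert None (Some ` {..<n}))) \<and>
     (AE \<omega> in M. \<forall>t\<ge>0.
        U t \<omega> = U 0 \<omega> - alpha * (LINT s:{0..t}|lborel. U s \<omega>)
          + h * (LINT s:{0..t}|lborel. prob_space.expectation M (\<lambda>\<omega>'. lam (U s \<omega>')))
          - (\<Sum>p\<in>{p \<in> Npts \<omega>. fst p \<in> {0..t} \<and> snd p \<le> lam (left_lim U (fst p) \<omega>)}.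
                left_lim U (fst p) \<omega>))"

definition couplings :: "real measure \<Rightarrow> real measure \<Rightarrow> (real \<times> real) measure set" where
  "couplings \<mu> \<nu> = {P. sets P = sets (borel :: (real \<times> real) measure)
       \<and> distr P borel fst = \<mu> \<and> distr P borel snd = \<nu>}"

definition W1 :: "real measure \<Rightarrow> real measure \<Rightarrow> ennreal" where
  "W1 \<mu> \<nu> = (INF P\<in>couplings \<mu> \<nu>. \<integral>\<^sup>+ x. ennreal \<bar>fst x - snd x\<bar> \<partial>P)"

end

theory Submission
  imports Defs
begin

text \<open>Let g(t) = E U(t).  In (NL) the jump term is nonnegative and nondecreasing in t, and
  h E \<lambda>(U(s)) \<le> k h g(s), so taking expectations gives
  g(t) - g(s) \<le> -(\<alpha> - k h) \<integral> g over (s, t].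
  Chaining implicit Euler steps of this inequality yields g(t) \<le> exp(-(\<alpha> - k h) t) g(0), and
  W1(\<eta>(t), \<delta>(0)) = g(t) because the only coupling with a Dirac mass is the product coupling.
  For a stationary solution, the pathwise bound U(1) \<le> U(0)/(1 + \<alpha>) + h sup \<lambda> together with
  the equality of the laws of U(0) and U(1) shows that the tail P(U(0) > x) is nondecreasing in
  x beyond some level, so it vanishes there; hence U(0) is bounded, thus integrable, and
  g(0) = g(1) \<le> exp(-(\<alpha> - k h)) g(0) forces U(0) = 0 almost surely.\<close>

section \<open>Real analysis\<close>

lemma dyadic_ceiling_bounds:
  fixes r :: real
  shows "r \<le> \<lceil>r * 2^n\<rceil> / 2^n" and "\<lceil>r * 2^n\<rceil> / 2^n < r + (1/2)^n"
proof -
  have pos: "(0::real) < 2^n" by simp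
  have "r * 2^n \<le> \<lceil>r * 2^n\<rceil>" and "\<lceil>r * 2^n\<rceil> < r * 2^n + 1"
    by (rule le_of_int_ceiling) linarith
  with pos show "r \<le> \<lceil>r * 2^n\<rceil> / 2^n" and "\<lceil>r * 2^n\<rceil> / 2^n < r + (1/2)^n"
    by (simp_all add: field_simps)
qed

text \<open>U at the dyadic point just above t takes countably many values per \<omega>, hence is jointly
  measurable, and converges to U(t) by right continuity.\<close>
lemma right_continuous_process_measurable:
  fixes U :: "real \<Rightarrow> 'a \<Rightarrow> real"
  assumes meas: "\<And>t. t \<ge> 0 \<Longrightarrow> U t \<in> borel_measurable M"
    and rcont: "\<And>\<omega> t. \<omega> \<in> space M \<Longrightarrow> t \<ge> 0 \<Longrightarrow> continuous (at_right t) (\<lambda>s. U s \<omega>)"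
  shows "(\<lambda>x. U (max 0 (fst x)) (snd x)) \<in> borel_measurable (lborel \<Otimes>\<^sub>M M)"
proof (rule borel_measurable_LIMSEQ_real)
  define q where "q n r = max 0 (real_of_int \<lceil>r * 2^n\<rceil> / 2^n)" for n :: nat and r :: real
  show "(\<lambda>x. U (q n (fst x)) (snd x)) \<in> borel_measurable (lborel \<Otimes>\<^sub>M M)" for n
  proof -
    have ceil_meas: "(\<lambda>x. \<lceil>fst x * (2::real)^n\<rceil>) \<in> measurable (lborel \<Otimes>\<^sub>M M) (count_space UNIV)"
    proof (subst measurable_count_space_eq2_countable, safe)
      fix a :: int
      have "(\<lambda>x. \<lceil>fst x * (2::real)^n\<rceil>) -` {a} \<inter> space (lborel \<Otimes>\<^sub>M M)
         = {x \<in> space (lborel \<Otimes>\<^sub>M M). real_of_int a - 1 < fst x * 2^n \<and> fst x * 2^n \<le> real_of_int a}"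
        by (auto simp: ceiling_eq_iff; linarith)
      also have "\<dots> \<in> sets (lborel \<Otimes>\<^sub>M M)" by measurable
      finally show "(\<lambda>x. \<lceil>fst x * (2::real)^n\<rceil>) -` {a} \<inter> space (lborel \<Otimes>\<^sub>M M) \<in> sets (lborel \<Otimes>\<^sub>M M)" .
    qed simp
    have "(\<lambda>x. U (max 0 (real_of_int \<lceil>fst x * (2::real)^n\<rceil> / 2^n)) (snd x))
        \<in> borel_measurable (lborel \<Otimes>\<^sub>M M)"
      by (rule measurable_compose_countable[OF _ ceil_meas], rule measurable_compose[OF measurable_snd])
        (use meas in auto)
    then show ?thesis by (simp add: q_def)
  qed
  fix x :: "real \<times> 'a" assume "x \<in> space (lborel \<Otimes>\<^sub>M M)"
  then have \<omega>: "snd x \<in> space M" by (auto simp: space_pair_measure)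
  define t where "t = max 0 (fst x)"
  have "continuous (at t within {t<..}) (\<lambda>s. U s (snd x))"
    using rcont[OF \<omega>] by (simp add: t_def)
  show "(\<lambda>n. U (q n (fst x)) (snd x)) \<longlonglongrightarrow> U (max 0 (fst x)) (snd x)"
  proof (rule LIMSEQ_I)
    fix e :: real assume "0 < e"
    then obtain d where "d > 0" and d: "\<And>s. s \<in> {t<..} \<Longrightarrow> dist s t < d \<Longrightarrow> dist (U s (snd x)) (U t (snd x)) < e"
      using \<open>continuous (at t within {t<..}) _\<close> unfolding continuous_within_eps_delta by blast
    then obtain N where N: "(1/2::real)^N < d" using real_arch_pow_inv[of d "1/2"] by auto
    have "norm (U (q n (fst x)) (snd x) - U t (snd x)) < e" if "N \<le> n" for n
    proof (cases "q n (fst x) = t")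
      case False
      have "(1/2::real)^n \<le> (1/2)^N" using that by (rule power_decreasing) auto
      with N have "(1/2::real)^n < d" by linarith
      then have "t \<le> q n (fst x) \<and> q n (fst x) < t + d"
        using dyadic_ceiling_bounds[of "fst x" n] \<open>d > 0\<close> by (auto simp: q_def t_def max_def)
      with False show ?thesis using d[of "q n (fst x)"] by (auto simp: dist_real_def)
    qed (use \<open>0 < e\<close> in simp)
    then show "\<exists>N. \<forall>n\<ge>N. norm (U (q n (fst x)) (snd x) - U (max 0 (fst x)) (snd x)) < e"
      by (auto simp: t_def)
  qed
qed

lemma set_integrable_bounded_real:
  fixes f g :: "real \<Rightarrow> real"
  assumes "A \<in> sets borel" and "A \<subseteq> {a..b}" and "g \<in> borel_measurable borel"
    and "\<And>x. x \<in> A \<Longrightarrow> f x = g x" and "\<And>x. x \<in> A \<Longrightarrow> \<bar>g x\<bar> \<le> C"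
  shows "set_integrable lborel A f"
proof -
  have "emeasure lborel A < \<infinity>"
    using assms(2) by (intro emeasure_bounded_finite bounded_subset[OF bounded_cbox[of a b]]) auto
  then have "integrable lborel (\<lambda>x. indicator A x *\<^sub>R g x)"
    using assms by (intro integrableI_bounded_set_indicator[where B=C]) auto
  moreover have "(\<lambda>x. indicator A x *\<^sub>R g x) = (\<lambda>x. indicator A x *\<^sub>R f x)"
    using assms(4) by (auto simp: indicator_def)
  ultimately show ?thesis unfolding set_integrable_def by simp
qed

lemma set_integrable_const_Ioc:
  fixes s t c :: real
  shows "set_integrable lborel {s<..t} (\<lambda>_. c)"
  by (rule set_integrable_bounded_real[where g="\<lambda>_. c" and a=s and b=t and C="\<bar>c\<bar>"]) auto

lemma set_integral_nonneg_real:
  fixes f :: "real \<Rightarrow> real"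
  assumes "\<And>x. x \<in> A \<Longrightarrow> 0 \<le> f x"
  shows "0 \<le> (LINT x:A|lborel. f x)"
  unfolding set_lebesgue_integral_def
  using assms by (intro Bochner_Integration.integral_nonneg) (auto simp: indicator_def)

text \<open>One implicit Euler step: the bound f(t) - f(r) \<le> \<beta>(t - r) for r \<in> [s, t] bounds the
  integral of f over (s, t] from below by (t - s)(f(t) - \<beta>(t - s)), which is then fed back
  into the case r = s.\<close>
lemma integral_dissipation_step:
  fixes f :: "real \<Rightarrow> real"
  assumes st: "s \<le> t" and a: "0 \<le> a" and \<beta>: "0 \<le> \<beta>"
    and nonneg: "\<And>r. r \<in> {s..t} \<Longrightarrow> 0 \<le> f r"
    and int: "set_integrable lborel {s<..t} f"
    and incr: "\<And>r. r \<in> {s..t} \<Longrightarrow> f t - f r \<le> - a * (LINT x:{r<..t}|lborel. f x) + \<beta> * (t - r)"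
  shows "f t * (1 + a * (t - s)) \<le> f s + \<beta> * (t - s) * (1 + a * (t - s))"
proof -
  have lower: "f t - \<beta> * (t - s) \<le> f r" if r: "r \<in> {s<..t}" for r
  proof -
    have "0 \<le> a * (LINT x:{r<..t}|lborel. f x)"
      using r nonneg a by (intro mult_nonneg_nonneg set_integral_nonneg_real) auto
    moreover have "\<beta> * (t - r) \<le> \<beta> * (t - s)" using r \<beta> by (intro mult_left_mono) auto
    ultimately show ?thesis using incr[of r] r by auto
  qed
  have "(t - s) * (f t - \<beta> * (t - s)) = (LINT x:{s<..t}|lborel. f t - \<beta> * (t - s))"
    using st by (simp add: set_integral_const)
  also have "\<dots> \<le> (LINT x:{s<..t}|lborel. f x)"
    using lower by (intro set_integral_mono set_integrable_const_Ioc int) auto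
  finally have "a * ((t - s) * (f t - \<beta> * (t - s))) \<le> a * (LINT x:{s<..t}|lborel. f x)"
    using a by (rule mult_left_mono)
  then show ?thesis using incr[of s] st by (simp add: algebra_simps)
qed

lemma implicit_Euler_exp_decay:
  fixes g :: "real \<Rightarrow> real" and c t :: real
  assumes c: "c > 0" and t: "t \<ge> 0"
    and step: "\<And>s t'. 0 \<le> s \<Longrightarrow> s \<le> t' \<Longrightarrow> g t' * (1 + c * (t' - s)) \<le> g s"
  shows "g t \<le> exp (- c * t) * g 0"
proof -
  have bound: "g t \<le> g 0 / (1 + c * t / real (Suc n)) ^ Suc n" for n
  proof -
    define \<tau> where "\<tau> = t / real (Suc n)"
    have "\<tau> \<ge> 0" using t by (simp add: \<tau>_def)
    then have pos: "1 + c * \<tau> > 0" using c by (simp add: add_pos_nonneg)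
    have "g (real j * \<tau>) \<le> g 0 / (1 + c * \<tau>) ^ j" for j
    proof (induction j)
      case (Suc j)
      have "g (real (Suc j) * \<tau>) * (1 + c * (real (Suc j) * \<tau> - real j * \<tau>)) \<le> g (real j * \<tau>)"
        using \<open>\<tau> \<ge> 0\<close> by (intro step) (auto simp: algebra_simps)
      then have "g (real (Suc j) * \<tau>) * (1 + c * \<tau>) \<le> g 0 / (1 + c * \<tau>) ^ j"
        using Suc by (simp add: algebra_simps)
      then have "g (real (Suc j) * \<tau>) \<le> g 0 / (1 + c * \<tau>) ^ j / (1 + c * \<tau>)"
        by (simp only: pos_le_divide_eq[OF pos])
      then show ?case by (simp add: field_simps)
    qed simp
    from this[of "Suc n"] show ?thesis by (simp add: \<tau>_def)
  qed
  have "(\<lambda>n. (1 + c * t / real (Suc n)) ^ Suc n) \<longlonglongrightarrow> exp (c * t)"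
    using LIMSEQ_Suc[OF tendsto_exp_limit_sequentially[of "c * t"]] by simp
  then have "(\<lambda>n. g 0 / (1 + c * t / real (Suc n)) ^ Suc n) \<longlonglongrightarrow> g 0 / exp (c * t)"
    by (intro tendsto_divide tendsto_const) auto
  then have "g t \<le> g 0 / exp (c * t)"
    by (rule LIMSEQ_le_const) (use bound in auto)
  then show ?thesis by (simp add: exp_minus field_simps)
qed

lemma integral_inequality_exp_decay:
  fixes f :: "real \<Rightarrow> real"
  assumes c: "c > 0" and t: "t \<ge> 0"
    and nonneg: "\<And>s. s \<ge> 0 \<Longrightarrow> 0 \<le> f s"
    and int: "\<And>s t. 0 \<le> s \<Longrightarrow> s \<le> t \<Longrightarrow> set_integrable lborel {s<..t} f"
    and incr: "\<And>s t. 0 \<le> s \<Longrightarrow> s \<le> t \<Longrightarrow> f t - f s \<le> - c * (LINT r:{s<..t}|lborel. f r)"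
  shows "f t \<le> exp (- c * t) * f 0"
proof (rule implicit_Euler_exp_decay[OF c t])
  fix s t' :: real assume "0 \<le> s" "s \<le> t'"
  then have "f t' * (1 + c * (t' - s)) \<le> f s + 0 * (t' - s) * (1 + c * (t' - s))"
    using c incr by (intro integral_dissipation_step int nonneg) auto
  then show "f t' * (1 + c * (t' - s)) \<le> f s" by simp
qed

section \<open>Probability\<close>

lemma W1_return_zero:
  fixes X :: "'a \<Rightarrow> real"
  assumes "prob_space M" and X[measurable]: "X \<in> borel_measurable M"
  shows "W1 (distr M borel X) (return borel 0) = (\<integral>\<^sup>+\<omega>. ennreal \<bar>X \<omega>\<bar> \<partial>M)"
proof -
  interpret prob_space M by fact
  let ?\<mu> = "distr M borel X"
  have proj_measurable [measurable]: "fst \<in> borel_measurable (borel :: (real \<times> real) measure)"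
    "snd \<in> borel_measurable (borel :: (real \<times> real) measure)"
    by (intro borel_measurable_continuous_onI continuous_intros)+
  have first_moment: "(\<integral>\<^sup>+x. ennreal \<bar>x\<bar> \<partial>?\<mu>) = (\<integral>\<^sup>+\<omega>. ennreal \<bar>X \<omega>\<bar> \<partial>M)"
    by (subst nn_integral_distr) auto
  have "W1 ?\<mu> (return borel 0) \<le> (\<integral>\<^sup>+\<omega>. ennreal \<bar>X \<omega>\<bar> \<partial>M)"
  proof -
    define P where "P = distr ?\<mu> borel (\<lambda>x::real. (x, 0::real))"
    have [measurable]: "(\<lambda>x::real. (x, 0::real)) \<in> borel_measurable borel" by simp
    have "distr P borel fst = ?\<mu>" and "distr P borel snd = return borel 0"
      unfolding P_def by (simp_all add: distr_distr comp_def)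
    then have "P \<in> couplings ?\<mu> (return borel 0)"
      unfolding couplings_def by (simp add: P_def)
    then have "W1 ?\<mu> (return borel 0) \<le> (\<integral>\<^sup>+x. ennreal \<bar>fst x - snd x\<bar> \<partial>P)"
      unfolding W1_def by (rule INF_lower)
    also have "\<dots> = (\<integral>\<^sup>+x. ennreal \<bar>x\<bar> \<partial>?\<mu>)"
      unfolding P_def by (subst nn_integral_distr) auto
    finally show ?thesis using first_moment by simp
  qed
  moreover have "(\<integral>\<^sup>+\<omega>. ennreal \<bar>X \<omega>\<bar> \<partial>M) \<le> W1 ?\<mu> (return borel 0)"
    unfolding W1_def
  proof (rule INF_greatest)
    fix Q assume "Q \<in> couplings ?\<mu> (return borel 0)"
    then have sets_Q: "sets Q = sets borel" and marg1: "distr Q borel fst = ?\<mu>"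
      and marg2: "distr Q borel snd = return borel 0" by (auto simp: couplings_def)
    have [measurable]: "fst \<in> borel_measurable Q" "snd \<in> borel_measurable Q"
      using proj_measurable by (simp_all add: measurable_cong_sets[OF sets_Q refl])
    have "AE y in distr Q borel snd. y = (0::real)" unfolding marg2 by (simp add: AE_return)
    then have snd_zero: "AE x in Q. snd x = 0" by (subst (asm) AE_distr_iff) auto
    have "(\<integral>\<^sup>+\<omega>. ennreal \<bar>X \<omega>\<bar> \<partial>M) = (\<integral>\<^sup>+x. ennreal \<bar>fst x\<bar> \<partial>Q)"
      unfolding first_moment[symmetric] marg1[symmetric] by (subst nn_integral_distr) auto
    also have "\<dots> = (\<integral>\<^sup>+x. ennreal \<bar>fst x - snd x\<bar> \<partial>Q)"
      by (rule nn_integral_cong_AE) (use snd_zero in auto)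
    finally show "(\<integral>\<^sup>+\<omega>. ennreal \<bar>X \<omega>\<bar> \<partial>M) \<le> (\<integral>\<^sup>+x. ennreal \<bar>fst x - snd x\<bar> \<partial>Q)" by simp
  qed
  ultimately show ?thesis by (rule antisym)
qed

context prob_space
begin

lemma AE_le_if_tail_nondecreasing:
  fixes X :: "'a \<Rightarrow> real"
  assumes X[measurable]: "X \<in> borel_measurable M"
    and tail: "\<And>x. K \<le> x \<Longrightarrow> prob {\<omega> \<in> space M. x < X \<omega>} \<le> prob {\<omega> \<in> space M. x + 1 < X \<omega>}"
  shows "AE \<omega> in M. X \<omega> \<le> K"
proof -
  define p where "p x = prob {\<omega> \<in> space M. x < X \<omega>}" for x
  have "p K \<le> p (K + real n)" for n
  proof (induction n)
    case (Suc n)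
    have "p (K + real n) \<le> p (K + real (Suc n))"
      using tail[of "K + real n"] by (simp add: p_def ac_simps)
    with Suc show ?case by linarith
  qed simp
  moreover have "(\<lambda>n. p (K + real n)) \<longlonglongrightarrow> measure M (\<Inter>n. {\<omega> \<in> space M. K + real n < X \<omega>})"
    unfolding p_def by (rule finite_Lim_measure_decseq) (auto simp: decseq_def)
  moreover have "(\<Inter>n. {\<omega> \<in> space M. K + real n < X \<omega>}) = {}"
  proof safe
    fix \<omega> assume \<omega>: "\<omega> \<in> (\<Inter>n. {\<omega> \<in> space M. K + real n < X \<omega>})"
    obtain n :: nat where "X \<omega> - K \<le> real n" using real_arch_simple by blast
    moreover have "K + real n < X \<omega>" using \<omega> by blast
    ultimately show "\<omega> \<in> {}" by linarith
  qed
  ultimately have "p K \<le> 0" by (auto intro: LIMSEQ_le_const)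
  then have "prob {\<omega> \<in> space M. K < X \<omega>} = 0" by (simp add: p_def measure_le_0_iff)
  then have "AE \<omega> in M. \<omega> \<notin> {\<omega> \<in> space M. K < X \<omega>}" using prob_eq_0[of "{\<omega> \<in> space M. K < X \<omega>}"] by simp
  then show ?thesis by (rule AE_mp) (auto intro: AE_I2)
qed

text \<open>The event {X' > x} has the probability of {X > x}, and for large x it is contained in
  {X > x + 1} up to a null set.\<close>
lemma AE_bounded_if_contraction_in_law:
  fixes X X' :: "'a \<Rightarrow> real"
  assumes X[measurable]: "X \<in> borel_measurable M" and X'[measurable]: "X' \<in> borel_measurable M"
    and same_law: "distr M borel X' = distr M borel X"
    and a: "a > 0" and contraction: "AE \<omega> in M. X' \<omega> \<le> X \<omega> / (1 + a) + C"
  shows "\<exists>K. AE \<omega> in M. X \<omega> \<le> K"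
proof (intro exI AE_le_if_tail_nondecreasing[OF X])
  fix x assume x: "((1 + a) * C + 1) / a \<le> x"
  have tail_law: "prob {\<omega> \<in> space M. x < Y \<omega>} = measure (distr M borel Y) {x<..}"
    if [measurable]: "Y \<in> borel_measurable M" for Y :: "'a \<Rightarrow> real"
    by (subst measure_distr) (auto simp: vimage_def Int_def conj_commute)
  have "(1 + a) * C + 1 \<le> a * x" using x a by (simp add: field_simps)
  moreover have "x * (1 + a) < X \<omega> + C * (1 + a)"
    if "X' \<omega> \<le> X \<omega> / (1 + a) + C" "x < X' \<omega>" for \<omega>
  proof -
    have "x * (1 + a) < X' \<omega> * (1 + a)" using that a by (intro mult_strict_right_mono) auto
    also have "\<dots> \<le> X \<omega> + C * (1 + a)" using that a by (simp add: field_simps)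
    finally show ?thesis .
  qed
  ultimately have key: "X' \<omega> \<le> X \<omega> / (1 + a) + C \<Longrightarrow> x < X' \<omega> \<Longrightarrow> x + 1 < X \<omega>" for \<omega>
    by (fastforce simp: algebra_simps)
  have "AE \<omega> in M. \<omega> \<in> {\<omega> \<in> space M. x < X' \<omega>} \<longrightarrow> \<omega> \<in> {\<omega> \<in> space M. x + 1 < X \<omega>}"
    using contraction by eventually_elim (auto intro: key)
  then have "prob {\<omega> \<in> space M. x < X' \<omega>} \<le> prob {\<omega> \<in> space M. x + 1 < X \<omega>}"
    by (intro finite_measure_mono_AE) auto
  then show "prob {\<omega> \<in> space M. x < X \<omega>} \<le> prob {\<omega> \<in> space M. x + 1 < X \<omega>}"
    using tail_law[OF X] tail_law[OF X'] same_law by simp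
qed

end

section \<open>Solutions of the nonlinear equation\<close>

locale NL_process = prob_space M for M :: "'a measure" +
  fixes Npts :: "'a \<Rightarrow> (real \<times> real) set" and lam :: "real \<Rightarrow> real"
    and alpha h B :: real and U :: "real \<Rightarrow> 'a \<Rightarrow> real"
  assumes poisson: "poisson_random_measure M Npts"
    and alpha_pos: "alpha > 0" and h_pos: "h > 0"
    and lam_nonneg: "\<And>u. u \<ge> 0 \<Longrightarrow> 0 \<le> lam u"
    and lam_le_B: "\<And>u. u \<ge> 0 \<Longrightarrow> lam u \<le> B"
    and lam_cont: "continuous_on {0..} lam"
    and solution: "NL_solution M Npts alpha h lam U"
begin

definition jump_sum :: "real \<Rightarrow> 'a \<Rightarrow> real" where
  "jump_sum t \<omega> = (\<Sum>p\<in>{p \<in> Npts \<omega>. fst p \<in> {0..t} \<and> snd p \<le> lam (left_lim U (fst p) \<omega>)}.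
     left_lim U (fst p) \<omega>)"

definition mean_rate :: "real \<Rightarrow> real" where
  "mean_rate s = expectation (\<lambda>\<omega>. lam (U s \<omega>))"

lemma U_measurable: "t \<ge> 0 \<Longrightarrow> U t \<in> borel_measurable M"
  and U_nonneg: "\<omega> \<in> space M \<Longrightarrow> t \<ge> 0 \<Longrightarrow> 0 \<le> U t \<omega>"
  and U_right_cont: "\<omega> \<in> space M \<Longrightarrow> t \<ge> 0 \<Longrightarrow> continuous (at_right t) (\<lambda>s. U s \<omega>)"
  and U_left_limit: "\<omega> \<in> space M \<Longrightarrow> t > 0 \<Longrightarrow> \<exists>l. ((\<lambda>s. U s \<omega>) \<longlongrightarrow> l) (at_left t)"
  using solution unfolding NL_solution_def by auto

lemma NL_equation:
  "AE \<omega> in M. \<forall>t\<ge>0. U t \<omega> = U 0 \<omega> - alpha * (LINT s:{0..t}|lborel. U s \<omega>)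
     + h * (LINT s:{0..t}|lborel. mean_rate s) - jump_sum t \<omega>"
  using solution unfolding NL_solution_def jump_sum_def mean_rate_def by auto

lemma B_nonneg: "0 \<le> B"
  using lam_nonneg[of 0] lam_le_B[of 0] by simp

lemma U_pair_measurable: "(\<lambda>x. U (max 0 (fst x)) (snd x)) \<in> borel_measurable (lborel \<Otimes>\<^sub>M M)"
  by (rule right_continuous_process_measurable) (auto intro: U_measurable U_right_cont)

lemma left_lim_nonneg:
  assumes \<omega>: "\<omega> \<in> space M" shows "0 \<le> left_lim U s \<omega>"
proof (cases "s \<le> 0")
  case False
  then obtain l where l: "((\<lambda>r. U r \<omega>) \<longlongrightarrow> l) (at_left s)" using U_left_limit[OF \<omega>] by force
  have "\<forall>\<^sub>F r in at_left s. 0 \<le> U r \<omega>"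
    using eventually_at_left_real[of 0 s] False by (auto elim!: eventually_mono intro: U_nonneg[OF \<omega>])
  then have "0 \<le> l" by (rule tendsto_lowerbound[OF l]) simp
  moreover have "Lim (at_left s) (\<lambda>r. U r \<omega>) = l" by (rule tendsto_Lim[OF _ l]) simp
  ultimately show ?thesis using False by (simp add: left_lim_def)
qed (simp add: left_lim_def U_nonneg[OF \<omega>])

text \<open>Only atoms below height B can trigger a jump, so boxes [0, n] \<times> [0, B] suffice.\<close>
lemma AE_finite_atoms_in_boxes: "AE \<omega> in M. \<forall>n::nat. finite (Npts \<omega> \<inter> ({0..real n} \<times> {0..B}))"
proof (subst AE_all_countable, intro allI)
  fix n :: nat
  have "test_set ({0..real n} \<times> {0..B})"
    unfolding test_set_def quadrant_def
  proof (intro conjI)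
    show "{0..real n} \<times> {0..B} \<in> sets (lborel :: (real \<times> real) measure)"
      by (simp, intro borel_closed closed_Times) auto
    show "emeasure (lborel :: (real \<times> real) measure) ({0..real n} \<times> {0..B}) < \<infinity>"
      by (intro emeasure_bounded_finite bounded_Times) auto
  qed auto
  then show "AE \<omega> in M. finite (Npts \<omega> \<inter> ({0..real n} \<times> {0..B}))"
    using poisson unfolding poisson_random_measure_def by auto
qed

lemma jump_sum_nonneg: "\<omega> \<in> space M \<Longrightarrow> 0 \<le> jump_sum t \<omega>"
  unfolding jump_sum_def by (intro sum_nonneg left_lim_nonneg)

lemma jump_sum_mono:
  assumes \<omega>: "\<omega> \<in> space M" and fin: "\<forall>n::nat. finite (Npts \<omega> \<inter> ({0..real n} \<times> {0..B}))"
    and "s \<le> t"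
  shows "jump_sum s \<omega> \<le> jump_sum t \<omega>"
  unfolding jump_sum_def
proof (rule sum_mono2)
  obtain n :: nat where n: "t \<le> real n" using real_arch_simple by blast
  have quad: "Npts \<omega> \<subseteq> quadrant" using poisson \<omega> unfolding poisson_random_measure_def by auto
  have "{p \<in> Npts \<omega>. fst p \<in> {0..t} \<and> snd p \<le> lam (left_lim U (fst p) \<omega>)}
      \<subseteq> Npts \<omega> \<inter> ({0..real n} \<times> {0..B})"
  proof
    fix p assume p: "p \<in> {p \<in> Npts \<omega>. fst p \<in> {0..t} \<and> snd p \<le> lam (left_lim U (fst p) \<omega>)}"
    have "lam (left_lim U (fst p) \<omega>) \<le> B" by (rule lam_le_B[OF left_lim_nonneg[OF \<omega>]])
    then show "p \<in> Npts \<omega> \<inter> ({0..real n} \<times> {0..B})"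
      using p quad n by (cases p) (auto simp: quadrant_def)
  qed
  then show "finite {p \<in> Npts \<omega>. fst p \<in> {0..t} \<and> snd p \<le> lam (left_lim U (fst p) \<omega>)}"
    using fin finite_subset by blast
qed (use \<open>s \<le> t\<close> left_lim_nonneg[OF \<omega>] in auto)

lemma lam_U_measurable:
  assumes "s \<ge> 0" shows "(\<lambda>\<omega>. lam (U s \<omega>)) \<in> borel_measurable M"
proof -
  have "(\<lambda>u. lam (max 0 u)) \<in> borel_measurable borel"
    by (intro borel_measurable_continuous_onI continuous_on_compose2[OF lam_cont] continuous_intros) auto
  from measurable_compose[OF U_measurable[OF assms] this]
  show ?thesis by (rule measurable_cong[THEN iffD1, rotated]) (use U_nonneg assms in auto)
qed

lemma lam_U_integrable: "s \<ge> 0 \<Longrightarrow> integrable M (\<lambda>\<omega>. lam (U s \<omega>))"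
  by (rule integrable_const_bound[where B=B]) (use lam_U_measurable U_nonneg lam_nonneg lam_le_B in auto)

lemma mean_rate_nonneg: "s \<ge> 0 \<Longrightarrow> 0 \<le> mean_rate s"
  unfolding mean_rate_def using U_nonneg lam_nonneg by (intro Bochner_Integration.integral_nonneg) auto

lemma mean_rate_le_B: "s \<ge> 0 \<Longrightarrow> mean_rate s \<le> B"
  using integral_mono[OF lam_U_integrable integrable_const, of s B] U_nonneg lam_le_B
  by (simp add: mean_rate_def prob_space)

text \<open>mean_rate is measurable because on [0, \<infinity>) it is the \<omega>-integral of a jointly measurable
  function of (r, \<omega>).\<close>
lemma mean_rate_set_integrable:
  assumes "A \<in> sets borel" "A \<subseteq> {0..b}" shows "set_integrable lborel A mean_rate"
proof -
  define m where "m r = (\<integral>\<omega>. lam (max 0 (U (max 0 r) \<omega>)) \<partial>M)" for r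
  have "(\<lambda>u. lam (max 0 u)) \<in> borel_measurable borel"
    by (intro borel_measurable_continuous_onI continuous_on_compose2[OF lam_cont] continuous_intros) auto
  from measurable_compose[OF U_pair_measurable this]
  have "m \<in> borel_measurable lborel"
    unfolding m_def by (intro borel_measurable_lebesgue_integral) simp
  moreover have "m r = mean_rate r" if "r \<ge> 0" for r
    unfolding m_def mean_rate_def using that U_nonneg by (intro Bochner_Integration.integral_cong) auto
  ultimately show ?thesis
    using assms mean_rate_nonneg mean_rate_le_B
    by (intro set_integrable_bounded_real[where g=m and C=B]) auto
qed

lemma integral_mean_rate_le:
  assumes "0 \<le> s" "s \<le> t" shows "(LINT r:{s<..t}|lborel. mean_rate r) \<le> (t - s) * B"
proof -
  have "(LINT r:{s<..t}|lborel. mean_rate r) \<le> (LINT r:{s<..t}|lborel. B)"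
    using assms by (intro set_integral_mono mean_rate_set_integrable[where b=t] set_integrable_const_Ioc)
      (auto intro: mean_rate_le_B)
  then show ?thesis using assms by (simp add: set_integral_const)
qed

lemma AE_U_le_linear: "AE \<omega> in M. \<forall>t\<ge>0. U t \<omega> \<le> U 0 \<omega> + h * B * t"
  using NL_equation AE_space
proof eventually_elim
  case (elim \<omega>)
  show ?case
  proof (intro allI impI)
    fix t :: real assume t: "0 \<le> t"
    have "0 \<le> alpha * (LINT s:{0..t}|lborel. U s \<omega>)"
      using U_nonneg[OF elim(2)] alpha_pos by (intro mult_nonneg_nonneg set_integral_nonneg_real) auto
    moreover have "(LINT s:{0..t}|lborel. mean_rate s) \<le> (LINT s:{0..t}|lborel. B)"
      using t by (intro set_integral_mono mean_rate_set_integrable[where b=t]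
          set_integrable_bounded_real[where g="\<lambda>_. B" and C="\<bar>B\<bar>" and a=0 and b=t])
        (auto intro: mean_rate_le_B)
    then have "h * (LINT s:{0..t}|lborel. mean_rate s) \<le> h * (t * B)"
      using t h_pos by (intro mult_left_mono) (auto simp: set_integral_const)
    moreover have "0 \<le> jump_sum t \<omega>" by (rule jump_sum_nonneg[OF elim(2)])
    ultimately show "U t \<omega> \<le> U 0 \<omega> + h * B * t"
      using elim(1) t by (auto simp: algebra_simps)
  qed
qed

lemma path_set_integrable:
  assumes \<omega>: "\<omega> \<in> space M" and bound: "\<forall>t\<ge>0. U t \<omega> \<le> U 0 \<omega> + h * B * t"
    and "A \<in> sets borel" "A \<subseteq> {0..T}"
  shows "set_integrable lborel A (\<lambda>r. U r \<omega>)"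
proof (rule set_integrable_bounded_real[where g="\<lambda>r. U (max 0 r) \<omega>" and C="U 0 \<omega> + h * B * T"])
  show "(\<lambda>r. U (max 0 r) \<omega>) \<in> borel_measurable borel"
    using measurable_compose[OF measurable_Pair2'[OF \<omega>] U_pair_measurable] by simp
  fix x assume "x \<in> A"
  then have x: "0 \<le> x" "x \<le> T" using assms by auto
  have "U x \<omega> \<le> U 0 \<omega> + h * B * x" using bound x by auto
  also have "\<dots> \<le> U 0 \<omega> + h * B * T"
    using x h_pos B_nonneg by (intro add_left_mono mult_left_mono) auto
  finally have "U x \<omega> \<le> U 0 \<omega> + h * B * T" .
  then show "\<bar>U (max 0 x) \<omega>\<bar> \<le> U 0 \<omega> + h * B * T" using U_nonneg[OF \<omega> x(1)] x by simp
qed (use assms in auto)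

text \<open>The jump term is nondecreasing in t, so it can be dropped from increments.\<close>
lemma AE_increment_bound:
  "AE \<omega> in M. \<forall>s t. 0 \<le> s \<longrightarrow> s \<le> t \<longrightarrow>
     U t \<omega> - U s \<omega> \<le> - alpha * (LINT r:{s<..t}|lborel. U r \<omega>) + h * (LINT r:{s<..t}|lborel. mean_rate r)"
  using NL_equation AE_space AE_U_le_linear AE_finite_atoms_in_boxes
proof eventually_elim
  case (elim \<omega>)
  show ?case
  proof (intro allI impI)
    fix s t :: real assume s: "0 \<le> s" and st: "s \<le> t"
    have split: "{0..t} = {0..s} \<union> {s<..t}" and disj: "{0..s} \<inter> {s<..t} = {}" using s st by auto
    have "(LINT r:{0..t}|lborel. U r \<omega>) = (LINT r:{0..s}|lborel. U r \<omega>) + (LINT r:{s<..t}|lborel. U r \<omega>)"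
      unfolding split by (rule set_integral_Un[OF disj]; rule path_set_integrable[OF elim(2) elim(3), where T=t])
        (use st s in auto)
    moreover have "(LINT r:{0..t}|lborel. mean_rate r)
        = (LINT r:{0..s}|lborel. mean_rate r) + (LINT r:{s<..t}|lborel. mean_rate r)"
      unfolding split by (rule set_integral_Un[OF disj]; rule mean_rate_set_integrable[where b=t])
        (use st s in auto)
    moreover have "jump_sum s \<omega> \<le> jump_sum t \<omega>" by (rule jump_sum_mono[OF elim(2) elim(4) st])
    ultimately show "U t \<omega> - U s \<omega>
        \<le> - alpha * (LINT r:{s<..t}|lborel. U r \<omega>) + h * (LINT r:{s<..t}|lborel. mean_rate r)"
      using elim(1)[rule_format, of t] elim(1)[rule_format, of s] s st by (simp add: algebra_simps)
  qed
qed

lemma AE_U1_contraction: "AE \<omega> in M. U 1 \<omega> \<le> U 0 \<omega> / (1 + alpha) + h * B"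
  using AE_increment_bound AE_U_le_linear AE_space
proof eventually_elim
  case (elim \<omega>)
  have "U 1 \<omega> * (1 + alpha * (1 - 0)) \<le> U 0 \<omega> + (h * B) * (1 - 0) * (1 + alpha * (1 - 0))"
  proof (rule integral_dissipation_step[where f="\<lambda>r. U r \<omega>"])
    show "set_integrable lborel {0<..1} (\<lambda>r. U r \<omega>)"
      by (rule path_set_integrable[OF elim(3) elim(2), where T=1]) auto
    show "U 1 \<omega> - U r \<omega> \<le> - alpha * (LINT x:{r<..1}|lborel. U x \<omega>) + h * B * (1 - r)"
      if r: "r \<in> {0..1}" for r
    proof -
      have "h * (LINT x:{r<..1}|lborel. mean_rate x) \<le> h * ((1 - r) * B)"
        using integral_mean_rate_le[of r 1] r h_pos by (intro mult_left_mono) auto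
      moreover have "U 1 \<omega> - U r \<omega>
          \<le> - alpha * (LINT x:{r<..1}|lborel. U x \<omega>) + h * (LINT x:{r<..1}|lborel. mean_rate x)"
        using elim(1) r by auto
      ultimately show ?thesis by (simp add: algebra_simps)
    qed
  qed (use alpha_pos h_pos B_nonneg U_nonneg[OF elim(3)] in auto)
  then have "U 1 \<omega> * (1 + alpha) \<le> U 0 \<omega> + h * B * (1 + alpha)" by simp
  then show ?case using alpha_pos by (simp add: field_simps)
qed

lemma stationary_AE_bounded:
  assumes "\<forall>t\<ge>0. distr M borel (U t) = distr M borel (U 0)"
  shows "\<exists>K. AE \<omega> in M. U 0 \<omega> \<le> K"
proof (rule AE_bounded_if_contraction_in_law[OF U_measurable U_measurable _ alpha_pos AE_U1_contraction])
  show "distr M borel (U 1) = distr M borel (U 0)" by (rule assms[rule_format]) simp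
qed simp_all

end

locale NL_process_linear = NL_process +
  fixes k :: real
  assumes lam_le_linear: "\<And>u. u \<ge> 0 \<Longrightarrow> lam u \<le> k * u"
    and kh_less_alpha: "k * h < alpha"
    and U0_integrable: "integrable M (U 0)"
begin

interpretation lborel_M: pair_sigma_finite lborel M
  by (simp add: pair_sigma_finite_def sigma_finite_lborel sigma_finite_measure_axioms)

definition mean :: "real \<Rightarrow> real" where
  "mean t = expectation (U t)"

lemma AE_U_bounded_on_interval:
  assumes "0 \<le> r" "r \<le> t"
  shows "AE \<omega> in M. U r \<omega> \<le> U 0 \<omega> + h * B * t"
  using AE_U_le_linear
proof eventually_elim
  case (elim \<omega>)
  have "h * B * r \<le> h * B * t" using assms h_pos B_nonneg by (intro mult_left_mono) auto
  then show ?case using elim assms by force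
qed

lemma U_integrable: assumes t: "t \<ge> 0" shows "integrable M (U t)"
proof (rule Bochner_Integration.integrable_bound)
  show "integrable M (\<lambda>\<omega>. U 0 \<omega> + h * B * t)" using U0_integrable by simp
  show "AE \<omega> in M. norm (U t \<omega>) \<le> norm (U 0 \<omega> + h * B * t)"
    using AE_U_bounded_on_interval[OF t order.refl] AE_space
    by eventually_elim (use U_nonneg t in auto)
qed (rule U_measurable[OF t])

lemma mean_nonneg: "t \<ge> 0 \<Longrightarrow> 0 \<le> mean t"
  unfolding mean_def using U_nonneg by (intro Bochner_Integration.integral_nonneg) auto

lemma mean_rate_le_mean: assumes t: "t \<ge> 0" shows "mean_rate t \<le> k * mean t"
proof -
  have "mean_rate t \<le> expectation (\<lambda>\<omega>. k * U t \<omega>)"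
    unfolding mean_rate_def using lam_le_linear U_nonneg t
    by (intro integral_mono lam_U_integrable integrable_mult_right U_integrable) auto
  then show ?thesis by (simp add: mean_def)
qed

lemma path_pair_integrable:
  assumes s: "0 \<le> s" and st: "s \<le> t"
  shows "integrable (lborel \<Otimes>\<^sub>M M) (\<lambda>(r, \<omega>). indicator {s<..t} r * U (max 0 r) \<omega>)"
    (is "integrable _ ?F")
proof (rule integrableI_nonneg)
  show F_meas: "?F \<in> borel_measurable (lborel \<Otimes>\<^sub>M M)"
    using U_pair_measurable by (simp add: split_beta') measurable
  show "AE x in lborel \<Otimes>\<^sub>M M. 0 \<le> ?F x"
    by (rule AE_I2) (auto simp: space_pair_measure intro!: mult_nonneg_nonneg U_nonneg)
  define C where "C = (\<integral>\<^sup>+\<omega>. ennreal (U 0 \<omega> + h * B * t) \<partial>M)"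
  have "C = ennreal (\<integral>\<omega>. U 0 \<omega> + h * B * t \<partial>M)"
    unfolding C_def using U0_integrable s st h_pos B_nonneg
    by (intro nn_integral_eq_integral AE_I2 add_nonneg_nonneg U_nonneg) auto
  then have "C < \<infinity>" by simp
  have inner: "(\<integral>\<^sup>+\<omega>. ennreal (?F (r, \<omega>)) \<partial>M) \<le> C * indicator {s<..t} r" for r
  proof (cases "r \<in> {s<..t}")
    case True
    have "(\<integral>\<^sup>+\<omega>. ennreal (?F (r, \<omega>)) \<partial>M) \<le> C"
      unfolding C_def using AE_U_bounded_on_interval[of r t] True s
      by (intro nn_integral_mono_AE) (auto elim!: eventually_mono intro: ennreal_leI)
    with True show ?thesis by simp
  qed simp
  have "(\<integral>\<^sup>+x. ennreal (?F x) \<partial>(lborel \<Otimes>\<^sub>M M)) = (\<integral>\<^sup>+r. \<integral>\<^sup>+\<omega>. ennreal (?F (r, \<omega>)) \<partial>M \<partial>lborel)"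
    by (subst nn_integral_fst[symmetric]) (use F_meas in auto)
  also have "\<dots> \<le> (\<integral>\<^sup>+r. C * indicator {s<..t} r \<partial>lborel)"
    by (intro nn_integral_mono inner)
  also have "\<dots> = C * emeasure lborel {s<..t}" by (rule nn_integral_cmult_indicator) simp
  also have "\<dots> < \<infinity>" using \<open>C < \<infinity>\<close> st by (simp add: ennreal_mult_less_top)
  finally show "(\<integral>\<^sup>+x. ennreal (?F x) \<partial>(lborel \<Otimes>\<^sub>M M)) < \<infinity>" .
qed

lemma
  assumes "0 \<le> s" "s \<le> t"
  shows mean_set_integrable: "set_integrable lborel {s<..t} mean"
    and integrable_path_integral: "integrable M (\<lambda>\<omega>. LINT r:{s<..t}|lborel. U r \<omega>)"
    and expectation_path_integral:
      "(\<integral>\<omega>. (LINT r:{s<..t}|lborel. U r \<omega>) \<partial>M) = (LINT r:{s<..t}|lborel. mean r)"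
proof -
  note F_int = path_pair_integrable[OF assms]
  have inner_r: "(\<integral>r. indicator {s<..t} r * U (max 0 r) \<omega> \<partial>lborel) = (LINT r:{s<..t}|lborel. U r \<omega>)" for \<omega>
    unfolding set_lebesgue_integral_def using assms
    by (intro Bochner_Integration.integral_cong) (auto simp: indicator_def)
  have inner_\<omega>: "(\<lambda>r. \<integral>\<omega>. indicator {s<..t} r * U (max 0 r) \<omega> \<partial>M) = (\<lambda>r. indicator {s<..t} r *\<^sub>R mean r)"
    unfolding mean_def using assms by (auto simp: indicator_def)
  show "set_integrable lborel {s<..t} mean"
    using lborel_M.integrable_fst[OF F_int] unfolding set_integrable_def inner_\<omega>[symmetric] by simp
  show "integrable M (\<lambda>\<omega>. LINT r:{s<..t}|lborel. U r \<omega>)"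
    using lborel_M.integrable_snd[OF F_int] inner_r by simp
  show "(\<integral>\<omega>. (LINT r:{s<..t}|lborel. U r \<omega>) \<partial>M) = (LINT r:{s<..t}|lborel. mean r)"
    using lborel_M.Fubini_integral[OF F_int] inner_r
    unfolding set_lebesgue_integral_def inner_\<omega>[symmetric] by simp
qed

lemma mean_increment_bound:
  assumes s: "0 \<le> s" and st: "s \<le> t"
  shows "mean t - mean s \<le> - (alpha - k * h) * (LINT r:{s<..t}|lborel. mean r)"
proof -
  have t: "0 \<le> t" using s st by linarith
  let ?I = "\<lambda>\<omega>. LINT r:{s<..t}|lborel. U r \<omega>"
  have "mean t - mean s = (\<integral>\<omega>. U t \<omega> - U s \<omega> \<partial>M)"
    unfolding mean_def using U_integrable[OF t] U_integrable[OF s] by simp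
  also have "\<dots> \<le> (\<integral>\<omega>. - alpha * ?I \<omega> + h * (LINT r:{s<..t}|lborel. mean_rate r) \<partial>M)"
    using AE_increment_bound s st integrable_path_integral[OF s st] U_integrable[OF t] U_integrable[OF s]
    by (intro integral_mono_AE) (auto elim!: eventually_mono)
  also have "\<dots> = - alpha * (LINT r:{s<..t}|lborel. mean r) + h * (LINT r:{s<..t}|lborel. mean_rate r)"
    using integrable_path_integral[OF s st] expectation_path_integral[OF s st] by (simp add: prob_space)
  also have "\<dots> \<le> - alpha * (LINT r:{s<..t}|lborel. mean r) + h * (k * (LINT r:{s<..t}|lborel. mean r))"
  proof -
    have "(LINT r:{s<..t}|lborel. mean_rate r) \<le> (LINT r:{s<..t}|lborel. k * mean r)"
      using s by (intro set_integral_mono mean_rate_set_integrable[where b=t] set_integrable_mult_right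
          mean_set_integrable[OF s st] mean_rate_le_mean) auto
    then show ?thesis using h_pos by (simp add: mult_left_mono)
  qed
  finally show ?thesis by (simp add: algebra_simps)
qed

lemma mean_exp_decay: "t \<ge> 0 \<Longrightarrow> mean t \<le> exp (- (alpha - k * h) * t) * mean 0"
  using kh_less_alpha
  by (intro integral_inequality_exp_decay mean_nonneg mean_set_integrable mean_increment_bound) auto

lemma W1_exp_decay:
  assumes t: "t \<ge> 0"
  shows "W1 (distr M borel (U t)) (return borel 0)
      \<le> ennreal (exp (- (alpha - k * h) * t)) * W1 (distr M borel (U 0)) (return borel 0)"
proof -
  have W1_mean: "W1 (distr M borel (U s)) (return borel 0) = ennreal (mean s)" if s: "s \<ge> 0" for s
  proof -
    have "W1 (distr M borel (U s)) (return borel 0) = (\<integral>\<^sup>+\<omega>. ennreal (U s \<omega>) \<partial>M)"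
      using W1_return_zero[OF prob_space_axioms U_measurable[OF s]] U_nonneg s
      by (simp cong: nn_integral_cong)
    also have "\<dots> = ennreal (mean s)"
      unfolding mean_def using U_integrable[OF s] U_nonneg s
      by (intro nn_integral_eq_integral AE_I2) auto
    finally show ?thesis .
  qed
  have "ennreal (mean t) \<le> ennreal (exp (- (alpha - k * h) * t) * mean 0)"
    by (rule ennreal_leI[OF mean_exp_decay[OF t]])
  also have "\<dots> = ennreal (exp (- (alpha - k * h) * t)) * ennreal (mean 0)"
    by (rule ennreal_mult) (auto intro: mean_nonneg)
  finally show ?thesis using W1_mean[OF t] W1_mean[of 0] by simp
qed

lemma stationary_law_return_0:
  assumes stat: "distr M borel (U 1) = distr M borel (U 0)"
  shows "distr M borel (U 0) = return borel 0"
proof -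
  have mean_distr: "mean t = (\<integral>x. x \<partial>distr M borel (U t))" if "t \<ge> 0" for t
    unfolding mean_def using that by (subst integral_distr) (auto intro: U_measurable)
  have "mean 0 = mean 1" using mean_distr[of 0] mean_distr[of 1] stat by simp
  also have "\<dots> \<le> exp (- (alpha - k * h)) * mean 0" using mean_exp_decay[of 1] by simp
  finally have "(1 - exp (- (alpha - k * h))) * mean 0 \<le> 0" by (simp add: algebra_simps)
  moreover have "exp (- (alpha - k * h)) < 1" using kh_less_alpha by simp
  ultimately have "mean 0 = 0" using mean_nonneg[of 0] by (simp add: mult_le_0_iff)
  then have "AE \<omega> in M. U 0 \<omega> = 0"
    using integral_nonneg_eq_0_iff_AE[OF U0_integrable] U_nonneg unfolding mean_def by (simp add: AE_I2)
  then have "distr M borel (U 0) = distr M borel (\<lambda>_. 0::real)"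
    by (intro distr_cong_AE) (auto intro: U_measurable)
  then show ?thesis by simp
qed

end

theorem mainTheorem3:
  fixes M :: "'a measure" and Npts :: "'a \<Rightarrow> (real \<times> real) set"
    and lam :: "real \<Rightarrow> real" and alpha h k :: real
    and U :: "real \<Rightarrow> 'a \<Rightarrow> real"
  assumes "prob_space M"
    and "poisson_random_measure M Npts"
    and "alpha > 0" and "h > 0"
    and "\<forall>u\<ge>0. 0 \<le> lam u"
    and "\<exists>B. \<forall>u\<ge>0. lam u \<le> B"
    and "mono_on {0..} lam"
    and "\<exists>L. L-lipschitz_on {0..} lam"
    and "lam 0 = 0"
    and "k > 0" and "\<forall>u\<ge>0. lam u \<le> k * u" and "k * h < alpha"
    and "NL_solution M Npts alpha h lam U"
  shows "((\<forall>t\<ge>0. distr M borel (U t) = distr M borel (U 0))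
            \<longrightarrow> distr M borel (U 0) = return borel 0)
       \<and> (integrable M (U 0) \<longrightarrow>
            (\<forall>t\<ge>0. W1 (distr M borel (U t)) (return borel 0)
                 \<le> ennreal (exp (- (alpha - k * h) * t)) * W1 (distr M borel (U 0)) (return borel 0)))"
proof -
  obtain B where B: "\<forall>u\<ge>0. lam u \<le> B" using assms(6) by blast
  obtain L where "L-lipschitz_on {0..} lam" using assms(8) by blast
  then have "continuous_on {0..} lam" by (rule lipschitz_on_continuous_on)
  with assms(1-5,13) B interpret NL_process M Npts lam alpha h B U
    by (intro NL_process.intro NL_process_axioms.intro) simp_all
  have linear: "NL_process_linear M Npts lam alpha h B U k" if "integrable M (U 0)"
    using assms(11,12) that
    by (intro NL_process_linear.intro NL_process_linear_axioms.intro NL_process_axioms) simp_all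
  have "distr M borel (U 0) = return borel 0"
    if stat: "\<forall>t\<ge>0. distr M borel (U t) = distr M borel (U 0)"
  proof -
    obtain K where K: "AE \<omega> in M. U 0 \<omega> \<le> K" using stationary_AE_bounded[OF stat] by blast
    have "AE \<omega> in M. norm (U 0 \<omega>) \<le> K"
      using K AE_space by eventually_elim (use U_nonneg in auto)
    then have "integrable M (U 0)" by (intro integrable_const_bound U_measurable) auto
    moreover have "distr M borel (U 1) = distr M borel (U 0)" by (rule stat[rule_format]) simp
    ultimately show ?thesis by (rule NL_process_linear.stationary_law_return_0[OF linear])
  qed
  then show ?thesis using NL_process_linear.W1_exp_decay[OF linear] by blast
qed

end
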